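(* Let $D_L$ be an oriented link diagram in $S^2$ in which every component passes through at least one crossing, and let $\Gamma_M$ be the perfect matching graph obtained by flattening all crossings of $D_L$ (the closed web associated to $D_L$), representing the planar trivalent graph $G$ with perfect matching $M$. Then $(G,M)\in\mathscr G$; that is, no perfect matching graph representing $(G,M)$ has a bad face in its hypercube of states.
   Context: Flattening a crossing of an oriented link diagram: in a small disk around the crossing, whose boundary meets the diagram in two incoming ends $p,q$ and two outgoing ends $r,s$, replace the crossing by two trivalent vertices $u$ (joined to $p,q$) and $v$ (joined to $r,s$) and an edge $uv$, with no crossings. Flattening all crossings yields a planar trivalent graph $G$ (multiple edges allowed) embedded in $S^2$, and the set $M$ of new edges is a perfect matching; the embedding with $M$ is the perfect matching graph $\Gamma_M$. A perfect matching graph is an embedding in $S^2$ of a planar trivalent graph with a perfect matching $M=\{M_1,\dots,M_n\}$ (ordered). Resolution configurations: $D=(Z(D),A(D))$, $Z(D)$ a finite set of circles immersed in $S^2$ (union has only transverse double points), $A(D)$ a finite totally ordered set of disjoint embedded arcs meeting the circles exactly in their endpoints. Surgery $s_A(D)$ along $A$: in a small disk around $A$ meeting the circles in segments with ends $z,w$ and $x,y$ ($z,x$ on one side of $A$), replace them by strands $z$–$y$ and $x$–$w$ crossing once; arcs become $A(D)\setminus\{A\}$. An arc is an $\eta$-, $\Delta$-, or $m$-arc according as surgery changes the number of circles by $0,+1,-1$. Resolutions: for a matching edge $e=uv$, let $a,b$ be the other edges at $u$ and $c,d$ those at $v$, with $a,c$ on the same side of $e$. The $0$-resolution removes $u,v,e$,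 joins $a$–$c$ and $b$–$d$ by disjoint strands parallel to $e$, and places an arc joining them; the $1$-resolution joins $a$–$d$ and $b$–$c$ by strands crossing once, no arc. $D_{\Gamma_M}(v)$, $v\in\{0,1\}^n$, takes the $v_i$-resolution at $M_i$, arcs $A_i$ ($v_i=0$) ordered by $i$. Bad face: states $v,u$ differing exactly in coordinates $i\neq j$, $v_i=v_j=0$, $u_i=u_j=1$, such that for some ordering of $\{i,j\}$: $A_i$ is an $\eta$-arc of $D_{\Gamma_M}(v)$, $A_j$ is an $\eta$-arc of $s_{A_i}(D_{\Gamma_M}(v))$, $A_j$ is a $\Delta$-arc of $D_{\Gamma_M}(v)$, and $A_i$ is an $m$-arc of $s_{A_j}(D_{\Gamma_M}(v))$. $\mathscr G$ is the family of pairs $(G,M)$ such that for every perfect matching graph representing $(G,M)$ (every plane embedding, every ordering of $M$) the hypercube of states contains no bad face. *)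

theory Defs
  imports Main
begin

definition conn_classes :: "'a set \<Rightarrow> ('a \<Rightarrow> 'a \<Rightarrow> bool) \<Rightarrow> 'a set set" where
  "conn_classes S R =
     (\<lambda>x. {y. (\<lambda>a b. a \<in> S \<and> b \<in> S \<and> (R a b \<or> R b a))\<^sup>*\<^sup>* x y}) ` S"

definition nclasses :: "'a set \<Rightarrow> ('a \<Rightarrow> 'a \<Rightarrow> bool) \<Rightarrow> nat" where
  "nclasses S R = card (conn_classes S R)"

definition fpf_involution_on :: "'a set \<Rightarrow> ('a \<Rightarrow> 'a) \<Rightarrow> bool" where
  "fpf_involution_on S f \<longleftrightarrow> (\<forall>d\<in>S. f d \<in> S \<and> f d \<noteq> d \<and> f (f d) = d)"

text \<open>Combinatorial map (darts S, edge involution alpha, rotation sigma) has genus 0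
  on every connected component: V - E + F = 2 C (Euler); this is exactly
  the condition that the rotation system comes from an embedding in the 2-sphere.\<close>
definition genus0 :: "'a set \<Rightarrow> ('a \<Rightarrow> 'a) \<Rightarrow> ('a \<Rightarrow> 'a) \<Rightarrow> bool" where
  "genus0 S \<alpha> \<sigma> \<longleftrightarrow>
     int (nclasses S (\<lambda>a b. b = \<sigma> a)) + int (nclasses S (\<lambda>a b. b = \<sigma> (\<alpha> a)))
     = int (nclasses S (\<lambda>a b. b = \<alpha> a)) + 2 * int (nclasses S (\<lambda>a b. b = \<sigma> a \<or> b = \<alpha> a))"

text \<open>H: darts (half-edges), alpha: the other half of the edge, vx: vertex of a dart,
  M: the darts belonging to matching edges.\<close>
definition tri_pm_graph :: "'d set \<Rightarrow> ('d \<Rightarrow> 'd) \<Rightarrow> ('d \<Rightarrow> 'v) \<Rightarrow> 'd set \<Rightarrow> bool" where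
  "tri_pm_graph H \<alpha> vx M \<longleftrightarrow>
     finite H \<and> fpf_involution_on H \<alpha> \<and>
     (\<forall>d\<in>H. card {e\<in>H. vx e = vx d} = 3) \<and>
     M \<subseteq> H \<and> (\<forall>d\<in>H. (d \<in> M \<longleftrightarrow> \<alpha> d \<in> M)) \<and>
     (\<forall>d\<in>H. card {e\<in>M. vx e = vx d} = 1) \<and>
     (\<forall>d\<in>M. vx (\<alpha> d) \<noteq> vx d)"

text \<open>A plane embedding = rotation system (cyclic order sigma of the three darts at each
  vertex) of genus 0.\<close>
definition plane_embedding :: "'d set \<Rightarrow> ('d \<Rightarrow> 'd) \<Rightarrow> ('d \<Rightarrow> 'v) \<Rightarrow> ('d \<Rightarrow> 'd) \<Rightarrow> bool" where
  "plane_embedding H \<alpha> vx \<sigma> \<longleftrightarrow>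
     inj_on \<sigma> H \<and>
     (\<forall>d\<in>H. \<sigma> d \<in> H \<and> vx (\<sigma> d) = vx d \<and> \<sigma> d \<noteq> d \<and> \<sigma> (\<sigma> d) \<noteq> d) \<and>
     genus0 H \<alpha> \<sigma>"

text \<open>A state is given by a set T of matching darts; the matching edge of m is
  1-resolved iff m or alpha m lies in T, otherwise 0-resolved.\<close>
definition junction :: "'d set \<Rightarrow> ('d \<Rightarrow> 'd) \<Rightarrow> ('d \<Rightarrow> 'd) \<Rightarrow> 'd set \<Rightarrow> 'd \<Rightarrow> 'd \<Rightarrow> bool" where
  "junction M \<alpha> \<sigma> T a b \<longleftrightarrow>
     (\<exists>m\<in>M. if m \<in> T \<or> \<alpha> m \<in> T
            then (a = \<sigma> m \<and> b = \<sigma> (\<alpha> m)) \<or> (a = \<sigma> (\<sigma> m) \<and> b = \<sigma> (\<sigma> (\<alpha> m)))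
            else (a = \<sigma> m \<and> b = \<sigma> (\<sigma> (\<alpha> m))) \<or> (a = \<sigma> (\<sigma> m) \<and> b = \<sigma> (\<alpha> m)))"

text \<open>Number of circles of the resolution configuration of state T: the circles are
  traced on the non-matching darts, alternating along graph edges and resolution strands.\<close>
definition ncircles :: "'d set \<Rightarrow> ('d \<Rightarrow> 'd) \<Rightarrow> ('d \<Rightarrow> 'd) \<Rightarrow> 'd set \<Rightarrow> 'd set \<Rightarrow> nat" where
  "ncircles H \<alpha> \<sigma> M T = nclasses (H - M) (\<lambda>a b. b = \<alpha> a \<or> junction M \<alpha> \<sigma> T a b)"

text \<open>Bad face spanned by the (distinct, both 0-resolved in T) matching edges of mi and mj,
  with ordering (i,j): A_i eta-arc of D(v), A_j eta-arc of s_{A_i} D(v),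
  A_j Delta-arc of D(v), A_i m-arc of s_{A_j} D(v).  Surgery along A_k turns the
  0-resolution at k into the 1-resolution.\<close>
definition bad_face :: "'d set \<Rightarrow> ('d \<Rightarrow> 'd) \<Rightarrow> ('d \<Rightarrow> 'd) \<Rightarrow> 'd set \<Rightarrow> 'd set \<Rightarrow> 'd \<Rightarrow> 'd \<Rightarrow> bool" where
  "bad_face H \<alpha> \<sigma> M T mi mj \<longleftrightarrow>
     T \<subseteq> M \<and> mi \<in> M \<and> mj \<in> M \<and> mj \<noteq> mi \<and> mj \<noteq> \<alpha> mi \<and>
     mi \<notin> T \<and> \<alpha> mi \<notin> T \<and> mj \<notin> T \<and> \<alpha> mj \<notin> T \<and>
     (let c0 = int (ncircles H \<alpha> \<sigma> M T);
          ci = int (ncircles H \<alpha> \<sigma> M (insert mi T));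
          cj = int (ncircles H \<alpha> \<sigma> M (insert mj T));
          cij = int (ncircles H \<alpha> \<sigma> M (insert mi (insert mj T)))
      in ci = c0 \<and> cij = ci \<and> cj = c0 + 1 \<and> cij = cj - 1)"

definition no_bad_face :: "'d set \<Rightarrow> ('d \<Rightarrow> 'd) \<Rightarrow> ('d \<Rightarrow> 'd) \<Rightarrow> 'd set \<Rightarrow> bool" where
  "no_bad_face H \<alpha> \<sigma> M \<longleftrightarrow> (\<forall>T mi mj. \<not> bad_face H \<alpha> \<sigma> M T mi mj)"

definition in_script_G :: "'d set \<Rightarrow> ('d \<Rightarrow> 'd) \<Rightarrow> ('d \<Rightarrow> 'v) \<Rightarrow> 'd set \<Rightarrow> bool" where
  "in_script_G H \<alpha> vx M \<longleftrightarrow>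
     tri_pm_graph H \<alpha> vx M \<and> (\<forall>\<sigma>. plane_embedding H \<alpha> vx \<sigma> \<longrightarrow> no_bad_face H \<alpha> \<sigma> M)"

text \<open>Darts X at crossings, beta: edge involution, tau: rotation at crossings (4-cycles),
  strands go straight through (d and tau(tau d) on the same strand),
  out d: the end d is outgoing at its crossing.\<close>
definition oriented_diagram :: "'x set \<Rightarrow> ('x \<Rightarrow> 'x) \<Rightarrow> ('x \<Rightarrow> 'x) \<Rightarrow> ('x \<Rightarrow> bool) \<Rightarrow> bool" where
  "oriented_diagram X \<beta> \<tau> out \<longleftrightarrow>
     finite X \<and> fpf_involution_on X \<beta> \<and> inj_on \<tau> X \<and>
     (\<forall>d\<in>X. \<tau> d \<in> X \<and> \<tau> (\<tau> d) \<noteq> d \<and> \<tau> (\<tau> (\<tau> (\<tau> d))) = d) \<and>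
     genus0 X \<beta> \<tau> \<and>
     (\<forall>d\<in>X. out (\<beta> d) = (\<not> out d) \<and> out (\<tau> (\<tau> d)) = (\<not> out d))"

definition crossing :: "('x \<Rightarrow> 'x) \<Rightarrow> 'x \<Rightarrow> 'x set" where
  "crossing \<tau> d = range (\<lambda>n. (\<tau> ^^ n) d)"

definition flat_darts :: "'x set \<Rightarrow> ('x \<Rightarrow> 'x) \<Rightarrow> ('x + ('x set \<times> bool)) set" where
  "flat_darts X \<tau> = Inl ` X \<union> (\<lambda>(d, b). Inr (crossing \<tau> d, b)) ` (X \<times> UNIV)"

definition flat_M :: "'x set \<Rightarrow> ('x \<Rightarrow> 'x) \<Rightarrow> ('x + ('x set \<times> bool)) set" where
  "flat_M X \<tau> = (\<lambda>(d, b). Inr (crossing \<tau> d, b)) ` (X \<times> UNIV)"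

fun flat_alpha :: "('x \<Rightarrow> 'x) \<Rightarrow> ('x + ('x set \<times> bool)) \<Rightarrow> ('x + ('x set \<times> bool))" where
  "flat_alpha \<beta> (Inl d) = Inl (\<beta> d)"
| "flat_alpha \<beta> (Inr (c, b)) = Inr (c, \<not> b)"

text \<open>Vertex (c, False) is u (incoming ends), (c, True) is v (outgoing ends).\<close>
fun flat_vx :: "('x \<Rightarrow> 'x) \<Rightarrow> ('x \<Rightarrow> bool) \<Rightarrow> ('x + ('x set \<times> bool)) \<Rightarrow> ('x set \<times> bool)" where
  "flat_vx \<tau> out (Inl d) = (crossing \<tau> d, out d)"
| "flat_vx \<tau> out (Inr (c, b)) = (c, b)"

end

theory Submission
  imports Defs
begin

text \<open>
  Flattening an oriented diagram gives a bipartite trivalent graph: the vertices u and v of a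
  crossing carry its incoming and its outgoing ends, and every edge joins a vertex of one kind
  to one of the other.  So in every state the circles pass alternately through the two kinds.
  Cut them open at the resolution of one matching edge: what remains are circles and two arcs
  with loose ends p, q on one side and r, s on the other.  Orienting the arcs by the colouring
  shows that each arc joins one of r, s to one of p, q.  One resolution closes the two arcs
  separately, the other joins them into a single circle, so changing one resolution always
  changes the number of circles.  Hence there are no eta-arcs at all, for any rotation system,
  and in particular no bad faces.
\<close>

section \<open>Connected classes\<close>

definition conn_step :: "'a set \<Rightarrow> ('a \<Rightarrow> 'a \<Rightarrow> bool) \<Rightarrow> 'a \<Rightarrow> 'a \<Rightarrow> bool" where
  "conn_step S R a b \<longleftrightarrow> a \<in> S \<and> b \<in> S \<and> (R a b \<or> R b a)"

lemma conn_classes_conn_step: "conn_classes S R = (\<lambda>x. {y. (conn_step S R)\<^sup>*\<^sup>* x y}) ` S"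
  unfolding conn_classes_def conn_step_def ..

lemma conn_step_rtranclp_sym: "(conn_step S R)\<^sup>*\<^sup>* a b \<Longrightarrow> (conn_step S R)\<^sup>*\<^sup>* b a"
  by (rule sympD[OF symp_rtranclp]) (auto simp: symp_def conn_step_def)

lemma conn_step_rtranclp_in: "(conn_step S R)\<^sup>*\<^sup>* x y \<Longrightarrow> x \<in> S \<Longrightarrow> y \<in> S"
  by (induction rule: rtranclp_induct) (auto simp: conn_step_def)

lemma nclasses_cong:
  assumes "\<And>a b. a \<in> S \<Longrightarrow> b \<in> S \<Longrightarrow> R a b \<or> R b a \<longleftrightarrow> R' a b \<or> R' b a"
  shows "nclasses S R = nclasses S R'"
proof -
  have "conn_step S R = conn_step S R'"
    using assms unfolding conn_step_def by (intro ext) blast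
  then show ?thesis unfolding nclasses_def conn_classes_conn_step by simp
qed

lemma nclasses_eq_if_rtranclp_eq:
  "(conn_step S R)\<^sup>*\<^sup>* = (conn_step S R')\<^sup>*\<^sup>* \<Longrightarrow> nclasses S R = nclasses S R'"
  unfolding nclasses_def conn_classes_conn_step by simp

lemma nclasses_less_if_joins:
  assumes "finite S" and coarser: "(conn_step S R)\<^sup>*\<^sup>* \<le> (conn_step S R')\<^sup>*\<^sup>*"
    and "x \<in> S" "y \<in> S" and "\<not> (conn_step S R)\<^sup>*\<^sup>* x y" "(conn_step S R')\<^sup>*\<^sup>* x y"
  shows "nclasses S R' < nclasses S R"
proof -
  let ?cls = "\<lambda>R x. {y. (conn_step S R)\<^sup>*\<^sup>* x y}"
  define h where "h C = \<Union> (?cls R' ` C)" for C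
  have cls_eq: "?cls R' a = ?cls R' b" if "(conn_step S R')\<^sup>*\<^sup>* a b" for a b
    using that conn_step_rtranclp_sym[OF that] by (auto intro: rtranclp_trans)
  have h_cls: "h (?cls R z) = ?cls R' z" for z
    using coarser cls_eq unfolding h_def by (auto 4 3)
  have "\<not> inj_on h (conn_classes S R)"
  proof
    assume "inj_on h (conn_classes S R)"
    moreover have "h (?cls R x) = h (?cls R y)"
      using h_cls cls_eq assms(6) by simp
    ultimately have "?cls R x = ?cls R y"
      using assms(3,4) unfolding conn_classes_conn_step by (auto dest: inj_onD)
    then show False using assms(5) by auto
  qed
  moreover have "finite (conn_classes S R)"
    using assms(1) unfolding conn_classes_conn_step by simp
  ultimately have "card (h ` conn_classes S R) < card (conn_classes S R)"
    using card_image_le eq_card_imp_inj_on le_neq_implies_less by metis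
  moreover have "h ` conn_classes S R = conn_classes S R'"
    unfolding conn_classes_conn_step image_image h_cls ..
  ultimately show ?thesis unfolding nclasses_def by simp
qed

section \<open>Closing up two alternating arcs\<close>

text \<open>
  A system of circles and two arcs, described by the set S of ends of its edges: \<open>\<alpha>\<close> and
  \<open>J\<close> pair the ends of alternate edges, \<open>J\<close> being unconstrained at the four loose ends
  p, q, r, s.
\<close>

locale alternating_strands =
  fixes S :: "'a set" and \<alpha> J :: "'a \<Rightarrow> 'a" and col :: "'a \<Rightarrow> bool" and p q r s :: 'a
  assumes finite_S: "finite S"
    and alpha_involution: "\<And>a. a \<in> S \<Longrightarrow> \<alpha> a \<in> S \<and> \<alpha> (\<alpha> a) = a \<and> col (\<alpha> a) \<noteq> col a"
    and J_involution: "\<And>a. a \<in> S - {p,q,r,s} \<Longrightarrow>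
      J a \<in> S - {p,q,r,s} \<and> J (J a) = a \<and> col (J a) \<noteq> col a"
    and ends_in_S: "p \<in> S" "q \<in> S" "r \<in> S" "s \<in> S"
    and ends_distinct: "p \<noteq> q" "r \<noteq> s"
    and end_colours: "\<not> col p" "\<not> col q" "col r" "col s"
begin

definition strand :: "'a \<Rightarrow> 'a \<Rightarrow> bool" where
  "strand a b \<longleftrightarrow> b = \<alpha> a \<or> (a \<notin> {p,q,r,s} \<and> b = J a)"

abbreviation connected :: "'a \<Rightarrow> 'a \<Rightarrow> bool" where
  "connected \<equiv> (conn_step S strand)\<^sup>*\<^sup>*"

text \<open>
  Traversing \<open>\<alpha>\<close>-edges from col to \<open>\<not> col\<close> and \<open>J\<close>-edges back orients every arc:
  r and s are sources and the sinks p and q are fixed points of walk, so the arc through r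
  cannot reach s.
\<close>

definition walk :: "'a \<Rightarrow> 'a" where
  "walk a = (if a \<in> {p,q} then a else if col a then \<alpha> a else J a)"

lemma walk_in_S: "a \<in> S \<Longrightarrow> walk a \<in> S"
  using alpha_involution[of a] J_involution[of a] end_colours unfolding walk_def by auto

lemma walk_pow_in_S: "(walk ^^ k) r \<in> S"
  by (induction k) (auto simp: ends_in_S walk_in_S)

lemma strand_walk:
  assumes "a \<in> S" "b \<in> S" "strand a b"
  shows "(b = walk a \<and> a \<notin> {p,q}) \<or> (a = walk b \<and> b \<notin> {p,q})"
  using assms alpha_involution[of a] J_involution[of a] end_colours unfolding strand_def walk_def
  by (cases "col a") auto

lemma conn_step_walk:
  "conn_step S strand a b \<Longrightarrow> (b = walk a \<and> a \<notin> {p,q}) \<or> (a = walk b \<and> b \<notin> {p,q})"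
  unfolding conn_step_def using strand_walk by blast

lemma walk_inner: "a \<in> S - {p,q} \<Longrightarrow> walk a = (if col a then \<alpha> a else J a)"
  unfolding walk_def by simp

lemma inner_if_not_col: "a \<in> S - {p,q} \<Longrightarrow> \<not> col a \<Longrightarrow> a \<in> S - {p,q,r,s}"
  using end_colours by auto

lemma col_walk: "a \<in> S - {p,q} \<Longrightarrow> col (walk a) \<longleftrightarrow> \<not> col a"
  using alpha_involution[of a] J_involution[OF inner_if_not_col, of a] walk_inner[of a]
  by (cases "col a") auto

lemma walk_inj: "inj_on walk (S - {p,q})"
proof
  fix a b assume a: "a \<in> S - {p,q}" and b: "b \<in> S - {p,q}" and eq: "walk a = walk b"
  then have same_col: "col a \<longleftrightarrow> col b" using col_walk by metis
  show "a = b"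
  proof (cases "col a")
    case True
    then have "\<alpha> a = \<alpha> b" using eq same_col walk_inner[OF a] walk_inner[OF b] by simp
    then show ?thesis using a b alpha_involution[of a] alpha_involution[of b] by (metis DiffD1)
  next
    case False
    then have "J a = J b" using eq same_col walk_inner[OF a] walk_inner[OF b] by simp
    then show ?thesis
      using False same_col J_involution[OF inner_if_not_col[OF a]]
        J_involution[OF inner_if_not_col[OF b]] by metis
  qed
qed

lemma walk_not_rs:
  assumes "a \<in> S - {p,q}"
  shows "walk a \<notin> {r,s}"
proof (cases "col a")
  case True
  then show ?thesis using col_walk[OF assms] end_colours by auto
next
  case False
  then show ?thesis
    using walk_inner[OF assms] J_involution[OF inner_if_not_col[OF assms False]] by auto
qed

lemma walk_preimage:
  assumes "(walk ^^ k) r = walk z" "z \<in> S - {p,q}"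
  shows "\<exists>j. (walk ^^ j) r = z"
  using assms(1)
proof (induction k)
  case 0
  then show ?case using walk_not_rs[OF assms(2)] by auto
next
  case (Suc k)
  show ?case
  proof (cases "(walk ^^ k) r \<in> {p,q}")
    case True
    then have "walk ((walk ^^ k) r) = (walk ^^ k) r" unfolding walk_def by simp
    then show ?thesis using Suc by simp
  next
    case False
    then have "(walk ^^ k) r = z"
      using Suc.prems walk_pow_in_S assms(2) inj_onD[OF walk_inj] by auto
    then show ?thesis by blast
  qed
qed

lemma connected_r_walk: "connected r y \<Longrightarrow> \<exists>k. (walk ^^ k) r = y"
proof (induction rule: rtranclp_induct)
  case base
  then show ?case by (metis funpow_0)
next
  case (step y z)
  then obtain k where k: "(walk ^^ k) r = y" by blast
  from conn_step_walk[OF step(2)] show ?case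
  proof
    assume "z = walk y \<and> y \<notin> {p,q}"
    then show ?thesis using k by (metis funpow.simps(2) o_apply)
  next
    assume "y = walk z \<and> z \<notin> {p,q}"
    moreover have "z \<in> S" using step(2) unfolding conn_step_def by blast
    ultimately show ?thesis using walk_preimage k by blast
  qed
qed

lemma not_connected_r_s: "\<not> connected r s"
proof
  assume "connected r s"
  then obtain k where k: "(walk ^^ k) r = s" using connected_r_walk by blast
  show False
  proof (cases k)
    case 0
    then show False using k ends_distinct by simp
  next
    case (Suc j)
    let ?c = "(walk ^^ j) r"
    have s_walk: "walk ?c = s" using k Suc by simp
    have "s \<notin> {p,q}" using end_colours by auto
    then have "?c \<notin> {p,q}" using s_walk unfolding walk_def by auto
    then show False using walk_not_rs[of ?c] walk_pow_in_S s_walk by auto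
  qed
qed

text \<open>
  Within a component, \<open>\<alpha>\<close> and \<open>J\<close> are colour-reversing bijections, \<open>J\<close> missing only
  the loose ends; so every component contains as many of r, s as of p, q.
\<close>

lemma component_meets_pq:
  assumes x: "x \<in> S" and "connected x r \<or> connected x s"
  shows "connected x p \<or> connected x q"
proof -
  define C where "C = {y. connected x y}"
  have C_S: "C \<subseteq> S" unfolding C_def using conn_step_rtranclp_in[OF _ x] by (simp add: subset_iff)
  have C_step: "b \<in> C" if "a \<in> C" "b \<in> S" "strand a b" for a b
  proof -
    have "conn_step S strand a b" using that C_S unfolding conn_step_def by (simp add: subset_iff)
    then show ?thesis using that(1) unfolding C_def by (simp add: rtranclp.rtrancl_into_rtrancl)
  qed
  have "finite C" using C_S finite_S finite_subset by blast
  have "card {a\<in>C. col a} = card {a\<in>C. \<not> col a}"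
    by (rule bij_betw_same_card, rule bij_betw_byWitness[where f'=\<alpha>])
      (use C_S alpha_involution C_step in \<open>auto simp: strand_def\<close>)
  moreover have "card {a\<in>C - {p,q,r,s}. col a} = card {a\<in>C - {p,q,r,s}. \<not> col a}"
    by (rule bij_betw_same_card, rule bij_betw_byWitness[where f'=J])
      (use C_S J_involution C_step in \<open>auto simp: strand_def\<close>)
  moreover have "card {a\<in>C. col a} = card {a\<in>C - {p,q,r,s}. col a} + card (C \<inter> {r,s})"
  proof -
    have split: "{a\<in>C. col a} = {a\<in>C - {p,q,r,s}. col a} \<union> (C \<inter> {r,s})"
      using end_colours by auto
    show ?thesis unfolding split by (rule card_Un_disjoint) (use \<open>finite C\<close> in auto)
  qed
  moreover have "card {a\<in>C. \<not> col a} = card {a\<in>C - {p,q,r,s}. \<not> col a} + card (C \<inter> {p,q})"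
  proof -
    have split: "{a\<in>C. \<not> col a} = {a\<in>C - {p,q,r,s}. \<not> col a} \<union> (C \<inter> {p,q})"
      using end_colours by auto
    show ?thesis unfolding split by (rule card_Un_disjoint) (use \<open>finite C\<close> in auto)
  qed
  ultimately have "card (C \<inter> {r,s}) = card (C \<inter> {p,q})" by simp
  moreover have "C \<inter> {r,s} \<noteq> {}" using assms(2) unfolding C_def by auto
  ultimately have "C \<inter> {p,q} \<noteq> {}"
    by (metis card.empty card_gt_0_iff finite.emptyI finite_insert finite_Int)
  then show ?thesis unfolding C_def by auto
qed

lemma ends_pairing:
  "(connected p r \<and> connected q s) \<or> (connected p s \<and> connected q r)"
proof -
  have sym: "connected a b \<Longrightarrow> connected b a" for a b by (rule conn_step_rtranclp_sym)
  have "\<not> (connected p r \<and> connected p s)" "\<not> (connected q r \<and> connected q s)"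
    using not_connected_r_s sym rtranclp_trans by metis+
  moreover have "connected r p \<or> connected r q" "connected s p \<or> connected s q"
    using component_meets_pq ends_in_S by blast+
  ultimately show ?thesis using sym by blast
qed

definition closing :: "'a \<Rightarrow> 'a \<Rightarrow> 'a \<Rightarrow> 'a \<Rightarrow> bool" where
  "closing x y a b \<longleftrightarrow> strand a b \<or> (a = p \<and> b = x) \<or> (a = q \<and> b = y)"

lemma conn_step_strand_le_closing: "conn_step S strand \<le> conn_step S (closing x y)"
  by (auto simp: conn_step_def closing_def)

lemma connected_closing: "connected a b \<Longrightarrow> (conn_step S (closing x y))\<^sup>*\<^sup>* a b"
  by (rule rtranclp_mono[THEN predicate2D, OF conn_step_strand_le_closing])

lemma nclasses_closing_eq:
  assumes px: "connected p x" and qy: "connected q y"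
  shows "nclasses S (closing x y) = nclasses S strand"
proof (rule nclasses_eq_if_rtranclp_eq, rule rtranclp_subset[OF conn_step_strand_le_closing])
  show "conn_step S (closing x y) \<le> connected"
  proof clarify
    fix a b assume "conn_step S (closing x y) a b"
    then have "conn_step S strand a b \<or> (a = p \<and> b = x) \<or> (a = q \<and> b = y)
        \<or> (b = p \<and> a = x) \<or> (b = q \<and> a = y)"
      unfolding conn_step_def closing_def by blast
    then show "connected a b"
      using px qy conn_step_rtranclp_sym[OF px] conn_step_rtranclp_sym[OF qy]
      by (elim disjE conjE) (simp_all add: r_into_rtranclp)
  qed
qed

lemma nclasses_closing_less:
  assumes xy: "{x,y} = {r,s}" and "connected p y"
  shows "nclasses S (closing x y) < nclasses S strand"
proof (rule nclasses_less_if_joins[OF finite_S])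
  show "x \<in> S" "y \<in> S" using xy ends_in_S by auto
  show "connected \<le> (conn_step S (closing x y))\<^sup>*\<^sup>*" using connected_closing by blast
  show "\<not> connected x y"
    using xy not_connected_r_s conn_step_rtranclp_sym[of S strand s r]
    by (auto simp: doubleton_eq_iff)
  have "conn_step S (closing x y) x p"
    using \<open>x \<in> S\<close> ends_in_S unfolding conn_step_def closing_def by blast
  then show "(conn_step S (closing x y))\<^sup>*\<^sup>* x y"
    using connected_closing[OF assms(2)] by (rule converse_rtranclp_into_rtranclp)
qed

lemma nclasses_closings_ne: "nclasses S (closing r s) \<noteq> nclasses S (closing s r)"
  using ends_pairing
proof
  assume "connected p r \<and> connected q s"
  then have "nclasses S (closing r s) = nclasses S strand"
    and "nclasses S (closing s r) < nclasses S strand"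
    using nclasses_closing_eq nclasses_closing_less[of s r] by (auto simp: insert_commute)
  then show ?thesis by simp
next
  assume "connected p s \<and> connected q r"
  then have "nclasses S (closing s r) = nclasses S strand"
    and "nclasses S (closing r s) < nclasses S strand"
    using nclasses_closing_eq nclasses_closing_less[of r s] by auto
  then show ?thesis by simp
qed

lemma nclasses_involution_closing:
  assumes K: "\<And>a. a \<in> S \<Longrightarrow> K a \<in> S \<and> K (K a) = a"
    and K_inner: "\<And>a. a \<in> S - {p,q,r,s} \<Longrightarrow> K a = J a"
    and K_ends: "K p = x" "K q = y" and xy: "{x,y} = {r,s}"
  shows "nclasses S (\<lambda>a b. b = \<alpha> a \<or> b = K a) = nclasses S (closing x y)"
proof (rule nclasses_cong)
  fix a b assume a: "a \<in> S" and b: "b \<in> S"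
  have E: "{p,q,r,s} = {p,q,x,y}" using xy by auto
  have Kx: "K x = p" "K y = q" using K[of p] K[of q] K_ends ends_in_S by auto
  have dist: "p \<noteq> q" "x \<noteq> y" "p \<noteq> x" "p \<noteq> y" "q \<noteq> x" "q \<noteq> y"
    using xy ends_distinct end_colours by (auto simp: doubleton_eq_iff)
  have K_iff: "b = K a \<longleftrightarrow> (a \<notin> {p,q,x,y} \<and> b = J a)
      \<or> (a = p \<and> b = x) \<or> (a = q \<and> b = y) \<or> (a = x \<and> b = p) \<or> (a = y \<and> b = q)"
  proof (cases "a \<in> {p,q,x,y}")
    case True
    then show ?thesis using dist K_ends Kx by auto
  next
    case False
    then show ?thesis using K_inner[of a] a unfolding E by auto
  qed
  have J_sym: "(a \<notin> {p,q,x,y} \<and> b = J a) \<longleftrightarrow> (b \<notin> {p,q,x,y} \<and> a = J b)"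
    using J_involution[of a] J_involution[of b] a b unfolding E by auto
  have sym: "b = \<alpha> a \<longleftrightarrow> a = \<alpha> b" "b = K a \<longleftrightarrow> a = K b" using alpha_involution K a b by metis+
  show "(b = \<alpha> a \<or> b = K a) \<or> (a = \<alpha> b \<or> a = K b) \<longleftrightarrow> closing x y a b \<or> closing x y b a"
    unfolding closing_def strand_def E using K_iff J_sym sym by argo
qed

theorem nclasses_reclosing_ne:
  assumes "\<And>a. a \<in> S \<Longrightarrow> K a \<in> S \<and> K (K a) = a" "\<And>a. a \<in> S - {p,q,r,s} \<Longrightarrow> K a = J a"
    and "K p = r" "K q = s"
    and "\<And>a. a \<in> S \<Longrightarrow> K' a \<in> S \<and> K' (K' a) = a" "\<And>a. a \<in> S - {p,q,r,s} \<Longrightarrow> K' a = J a"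
    and "K' p = s" "K' q = r"
  shows "nclasses S (\<lambda>a b. b = \<alpha> a \<or> b = K a) \<noteq> nclasses S (\<lambda>a b. b = \<alpha> a \<or> b = K' a)"
  using nclasses_closings_ne assms
    nclasses_involution_closing[of K r s] nclasses_involution_closing[of K' s r]
  by (simp add: insert_commute)

end

section \<open>States of a bipartite trivalent graph\<close>

locale bipartite_rotation_system =
  fixes H :: "'d set" and \<alpha> \<sigma> :: "'d \<Rightarrow> 'd" and vx :: "'d \<Rightarrow> 'v" and M :: "'d set"
    and side :: "'v \<Rightarrow> bool"
  assumes graph: "tri_pm_graph H \<alpha> vx M"
    and bipartite: "\<And>d. d \<in> H \<Longrightarrow> side (vx (\<alpha> d)) \<noteq> side (vx d)"
    and rotation_inj: "inj_on \<sigma> H"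
    and rotation: "\<And>d. d \<in> H \<Longrightarrow> \<sigma> d \<in> H \<and> vx (\<sigma> d) = vx d \<and> \<sigma> d \<noteq> d \<and> \<sigma> (\<sigma> d) \<noteq> d"
begin

lemma finite_H: "finite H"
  using graph unfolding tri_pm_graph_def by blast

lemma M_subset_H: "M \<subseteq> H"
  using graph unfolding tri_pm_graph_def by blast

lemma alpha_H: "d \<in> H \<Longrightarrow> \<alpha> d \<in> H \<and> \<alpha> (\<alpha> d) = d"
  using graph unfolding tri_pm_graph_def fpf_involution_on_def by blast

lemma alpha_M_iff: "d \<in> H \<Longrightarrow> \<alpha> d \<in> M \<longleftrightarrow> d \<in> M"
  using graph unfolding tri_pm_graph_def by blast

lemma matching_dart_unique:
  assumes "m \<in> M" "m' \<in> M" "vx m = vx m'"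
  shows "m = m'"
proof -
  have "card {e\<in>M. vx e = vx m} = 1"
    using graph assms(1) M_subset_H unfolding tri_pm_graph_def by blast
  then obtain e where e: "{e'\<in>M. vx e' = vx m} = {e}" by (rule card_1_singletonE)
  have "m \<in> {e'\<in>M. vx e' = vx m}" "m' \<in> {e'\<in>M. vx e' = vx m}" using assms by auto
  then show ?thesis unfolding e by simp
qed

definition matching_dart :: "'d \<Rightarrow> 'd" where
  "matching_dart a = (SOME m. m \<in> M \<and> vx m = vx a)"

lemma matching_dart_at_vertex: "a \<in> H \<Longrightarrow> matching_dart a \<in> M \<and> vx (matching_dart a) = vx a"
proof -
  assume "a \<in> H"
  then have "card {e\<in>M. vx e = vx a} = 1"
    using graph unfolding tri_pm_graph_def by blast
  then have "\<exists>m. m \<in> M \<and> vx m = vx a"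
    by (metis (mono_tags, lifting) card_1_singletonE mem_Collect_eq singletonI)
  then show ?thesis unfolding matching_dart_def by (rule someI_ex)
qed

lemma matching_dart_eqI: "a \<in> H \<Longrightarrow> m \<in> M \<Longrightarrow> vx m = vx a \<Longrightarrow> matching_dart a = m"
  using matching_dart_at_vertex matching_dart_unique by metis

lemma rotation_at_matching:
  assumes "m \<in> M"
  shows "\<sigma> m \<in> H - M" "\<sigma> (\<sigma> m) \<in> H - M" "\<sigma> (\<sigma> m) \<noteq> \<sigma> m"
    and "vx (\<sigma> m) = vx m" "vx (\<sigma> (\<sigma> m)) = vx m" "\<sigma> m \<noteq> m" "\<sigma> (\<sigma> m) \<noteq> m"
proof -
  have m: "m \<in> H" using assms M_subset_H by blast
  show "vx (\<sigma> m) = vx m" "\<sigma> m \<noteq> m" "\<sigma> (\<sigma> m) \<noteq> m" using rotation[OF m] by auto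
  moreover have "\<sigma> m \<in> H" using rotation[OF m] by blast
  ultimately show "vx (\<sigma> (\<sigma> m)) = vx m" "\<sigma> (\<sigma> m) \<noteq> \<sigma> m"
    using rotation[of "\<sigma> m"] inj_onD[OF rotation_inj, of "\<sigma> m" m] m by auto
  then show "\<sigma> m \<in> H - M" "\<sigma> (\<sigma> m) \<in> H - M"
    using rotation[OF m] rotation[of "\<sigma> m"] matching_dart_unique[OF assms]
      \<open>vx (\<sigma> m) = vx m\<close> \<open>\<sigma> m \<noteq> m\<close> \<open>\<sigma> (\<sigma> m) \<noteq> m\<close> by (metis DiffI)+
qed

lemma unmatched_dart_cases:
  assumes a: "a \<in> H - M"
  shows "a = \<sigma> (matching_dart a) \<or> a = \<sigma> (\<sigma> (matching_dart a))"
proof -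
  define m where "m = matching_dart a"
  have m: "m \<in> M" "vx m = vx a" using matching_dart_at_vertex[of a] a unfolding m_def by auto
  define V where "V = {e\<in>H. vx e = vx a}"
  have sub: "{m, \<sigma> m, \<sigma> (\<sigma> m)} \<subseteq> V"
    using rotation_at_matching[OF m(1)] m M_subset_H unfolding V_def by auto
  have "card {m, \<sigma> m, \<sigma> (\<sigma> m)} = 3"
    using rotation_at_matching[OF m(1)] by auto
  moreover have "card V = 3"
    using graph a unfolding V_def tri_pm_graph_def by blast
  ultimately have "{m, \<sigma> m, \<sigma> (\<sigma> m)} = V"
    using card_subset_eq[OF _ sub] finite_H unfolding V_def by simp
  moreover have "a \<in> V" "a \<noteq> m" using a m unfolding V_def by auto
  ultimately show ?thesis unfolding m_def by blast
qed

lemma matching_dart_eq_iff: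
  assumes "a \<in> H - M" "m \<in> M"
  shows "matching_dart a = m \<longleftrightarrow> a = \<sigma> m \<or> a = \<sigma> (\<sigma> m)"
  using unmatched_dart_cases[OF assms(1)] rotation_at_matching[OF assms(2)]
    matching_dart_eqI[of a m] assms
  by auto

definition partner :: "'d set \<Rightarrow> 'd \<Rightarrow> 'd" where
  "partner T a =
     (let m = matching_dart a in
      if m \<in> T \<or> \<alpha> m \<in> T then (if a = \<sigma> m then \<sigma> (\<alpha> m) else \<sigma> (\<sigma> (\<alpha> m)))
      else (if a = \<sigma> m then \<sigma> (\<sigma> (\<alpha> m)) else \<sigma> (\<alpha> m)))"

lemma junction_imp_partner:
  assumes a: "a \<in> H - M" and "junction M \<alpha> \<sigma> T a b"
  shows "b = partner T a"
proof -
  obtain m where m: "m \<in> M" and jm: "if m \<in> T \<or> \<alpha> m \<in> T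
      then (a = \<sigma> m \<and> b = \<sigma> (\<alpha> m)) \<or> (a = \<sigma> (\<sigma> m) \<and> b = \<sigma> (\<sigma> (\<alpha> m)))
      else (a = \<sigma> m \<and> b = \<sigma> (\<sigma> (\<alpha> m))) \<or> (a = \<sigma> (\<sigma> m) \<and> b = \<sigma> (\<alpha> m))"
    using assms(2) unfolding junction_def by blast
  then have "matching_dart a = m" using matching_dart_eq_iff[OF a m] by (auto split: if_splits)
  then show ?thesis
    using jm rotation_at_matching(3)[OF m] unfolding partner_def by (auto split: if_splits)
qed

lemma junction_iff:
  assumes a: "a \<in> H - M"
  shows "junction M \<alpha> \<sigma> T a b \<or> junction M \<alpha> \<sigma> T b a \<longleftrightarrow> b = partner T a"
proof
  assume "junction M \<alpha> \<sigma> T a b \<or> junction M \<alpha> \<sigma> T b a"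
  then show "b = partner T a"
  proof
    assume "junction M \<alpha> \<sigma> T a b"
    then show ?thesis by (rule junction_imp_partner[OF a])
  next
    assume "junction M \<alpha> \<sigma> T b a"
    then obtain m where m: "m \<in> M" and jm: "if m \<in> T \<or> \<alpha> m \<in> T
        then (b = \<sigma> m \<and> a = \<sigma> (\<alpha> m)) \<or> (b = \<sigma> (\<sigma> m) \<and> a = \<sigma> (\<sigma> (\<alpha> m)))
        else (b = \<sigma> m \<and> a = \<sigma> (\<sigma> (\<alpha> m))) \<or> (b = \<sigma> (\<sigma> m) \<and> a = \<sigma> (\<alpha> m))"
      unfolding junction_def by blast
    have m': "\<alpha> m \<in> M" "\<alpha> (\<alpha> m) = m"
      using m M_subset_H alpha_M_iff alpha_H by blast+
    have "matching_dart a = \<alpha> m"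
      using jm matching_dart_eq_iff[OF a m'(1)] by (auto split: if_splits)
    then show ?thesis
      using jm m' rotation_at_matching(3)[OF m'(1)] unfolding partner_def by (auto split: if_splits)
  qed
next
  assume b: "b = partner T a"
  define m where "m = matching_dart a"
  have m: "m \<in> M" using matching_dart_at_vertex[of a] a unfolding m_def by auto
  have "a = \<sigma> m \<or> a = \<sigma> (\<sigma> m)" using unmatched_dart_cases[OF a] unfolding m_def by simp
  then have "junction M \<alpha> \<sigma> T a b"
    unfolding junction_def using m b rotation_at_matching(3)[OF m]
    unfolding partner_def m_def[symmetric]
    by (intro bexI[of _ m]) (auto split: if_splits)
  then show "junction M \<alpha> \<sigma> T a b \<or> junction M \<alpha> \<sigma> T b a" ..
qed

lemma ncircles_eq_nclasses_partner:
  "ncircles H \<alpha> \<sigma> M T = nclasses (H - M) (\<lambda>a b. b = \<alpha> a \<or> b = partner T a)"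
  unfolding ncircles_def
proof (rule nclasses_cong)
  fix a b assume a: "a \<in> H - M" and b: "b \<in> H - M"
  have "b = \<alpha> a \<longleftrightarrow> a = \<alpha> b" using a b alpha_H by (metis DiffD1)
  moreover have "b = partner T a \<longleftrightarrow> a = partner T b"
    using junction_iff[OF a, where T=T and b=b] junction_iff[OF b, where T=T and b=a] by argo
  ultimately show "(b = \<alpha> a \<or> junction M \<alpha> \<sigma> T a b) \<or> (a = \<alpha> b \<or> junction M \<alpha> \<sigma> T b a)
      \<longleftrightarrow> (b = \<alpha> a \<or> b = partner T a) \<or> (a = \<alpha> b \<or> a = partner T b)"
    using junction_iff[OF a, where T=T and b=b] by argo
qed

lemma partner_cases:
  "partner T a = \<sigma> (\<alpha> (matching_dart a)) \<or> partner T a = \<sigma> (\<sigma> (\<alpha> (matching_dart a)))"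
  unfolding partner_def Let_def by auto

lemma alpha_matching_dart: "a \<in> H \<Longrightarrow> \<alpha> (matching_dart a) \<in> M"
  using matching_dart_at_vertex alpha_M_iff M_subset_H by blast

lemma partner_in: "a \<in> H - M \<Longrightarrow> partner T a \<in> H - M"
  using partner_cases rotation_at_matching(1,2)[OF alpha_matching_dart] by (metis DiffD1)

lemma matching_dart_partner:
  assumes "a \<in> H - M"
  shows "matching_dart (partner T a) = \<alpha> (matching_dart a)"
proof -
  have "\<alpha> (matching_dart a) \<in> M" using assms alpha_matching_dart by blast
  then show ?thesis
    using matching_dart_eq_iff[OF partner_in[OF assms]] partner_cases by blast
qed

lemma partner_involution:
  assumes "a \<in> H - M"
  shows "partner T (partner T a) = a"
proof -
  have "junction M \<alpha> \<sigma> T a (partner T a) \<or> junction M \<alpha> \<sigma> T (partner T a) a"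
    using junction_iff[OF assms] by blast
  then show ?thesis
    using junction_iff[OF partner_in[OF assms, of T], where T=T and b=a] by argo
qed

lemma side_partner:
  assumes "a \<in> H - M"
  shows "side (vx (partner T a)) \<noteq> side (vx a)"
proof -
  have "a \<in> H" using assms by blast
  then have "vx (partner T a) = vx (\<alpha> (matching_dart a))"
    using partner_cases rotation_at_matching(4,5)[OF alpha_matching_dart] by metis
  moreover have "matching_dart a \<in> H" "vx (matching_dart a) = vx a"
    using matching_dart_at_vertex \<open>a \<in> H\<close> M_subset_H by auto
  ultimately show ?thesis using bipartite by metis
qed

lemma partner_insert_eq:
  assumes "a \<in> H - M" "matching_dart a \<noteq> m" "matching_dart a \<noteq> \<alpha> m"
  shows "partner (insert m T) a = partner T a"
proof -
  have "\<alpha> (matching_dart a) \<noteq> m"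
    using assms alpha_H[of "matching_dart a"] matching_dart_at_vertex M_subset_H
    by (metis DiffD1 subsetD)
  then show ?thesis using assms(2) unfolding partner_def Let_def by simp
qed

text \<open>Every arc is a Delta- or an m-arc: there are no eta-arcs.\<close>

lemma ncircles_insert_ne:
  assumes mi: "mi \<in> M" "mi \<notin> T" "\<alpha> mi \<notin> T"
  shows "ncircles H \<alpha> \<sigma> M (insert mi T) \<noteq> ncircles H \<alpha> \<sigma> M T"
proof -
  define p q r s where ends_def: "p = \<sigma> mi" "q = \<sigma> (\<sigma> mi)" "r = \<sigma> (\<sigma> (\<alpha> mi))" "s = \<sigma> (\<alpha> mi)"
  define col where "col a \<longleftrightarrow> side (vx a) \<noteq> side (vx mi)" for a
  have mi_H: "mi \<in> H" using mi M_subset_H by blast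
  have ami: "\<alpha> mi \<in> M" "\<alpha> (\<alpha> mi) = mi"
    using alpha_M_iff[OF mi_H] alpha_H[OF mi_H] mi by blast+
  have ends: "p \<in> H - M" "q \<in> H - M" "r \<in> H - M" "s \<in> H - M" "p \<noteq> q" "r \<noteq> s"
    using rotation_at_matching[OF mi(1)] rotation_at_matching[OF ami(1)]
    unfolding ends_def by auto
  have E: "a \<in> {p,q,r,s} \<longleftrightarrow> matching_dart a = mi \<or> matching_dart a = \<alpha> mi" if "a \<in> H - M" for a
    using matching_dart_eq_iff[OF that mi(1)] matching_dart_eq_iff[OF that ami(1)]
    unfolding ends_def by auto
  have col_flip: "col b \<noteq> col a" if "side (vx b) \<noteq> side (vx a)" for a b
    using that unfolding col_def by auto
  interpret alternating_strands "H - M" \<alpha> "partner T" col p q r s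
  proof
    show "finite (H - M)" using finite_H by simp
    show "\<alpha> a \<in> H - M \<and> \<alpha> (\<alpha> a) = a \<and> col (\<alpha> a) \<noteq> col a" if "a \<in> H - M" for a
      using that alpha_H[of a] alpha_M_iff[of a] col_flip[OF bipartite[of a]] by auto
    show "partner T a \<in> H - M - {p,q,r,s} \<and> partner T (partner T a) = a
        \<and> col (partner T a) \<noteq> col a" if "a \<in> H - M - {p,q,r,s}" for a
    proof -
      have a: "a \<in> H - M" "matching_dart a \<noteq> mi" "matching_dart a \<noteq> \<alpha> mi" using that E by auto
      then have "matching_dart (partner T a) \<noteq> mi" "matching_dart (partner T a) \<noteq> \<alpha> mi"
        using matching_dart_partner[OF a(1)] alpha_H[of "matching_dart a"] ami
          matching_dart_at_vertex M_subset_H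
        by (metis DiffD1 subsetD)+
      then show ?thesis
        using a partner_in E partner_involution col_flip[OF side_partner] by blast
    qed
    show "p \<in> H - M" "q \<in> H - M" "r \<in> H - M" "s \<in> H - M" "p \<noteq> q" "r \<noteq> s"
      by (fact ends)+
    show "\<not> col p" "\<not> col q" "col r" "col s"
      using rotation_at_matching(4,5)[OF mi(1)] rotation_at_matching(4,5)[OF ami(1)]
        bipartite[OF mi_H]
      unfolding col_def ends_def by auto
  qed
  have "nclasses (H - M) (\<lambda>a b. b = \<alpha> a \<or> b = partner T a)
      \<noteq> nclasses (H - M) (\<lambda>a b. b = \<alpha> a \<or> b = partner (insert mi T) a)"
  proof (rule nclasses_reclosing_ne)
    show "partner T a \<in> H - M \<and> partner T (partner T a) = a"
      and "partner (insert mi T) a \<in> H - M \<and> partner (insert mi T) (partner (insert mi T) a) = a"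
      if "a \<in> H - M" for a
      using partner_in[OF that] partner_involution[OF that] by blast+
    show "partner (insert mi T) a = partner T a" if "a \<in> H - M - {p,q,r,s}" for a
      using partner_insert_eq that E by blast
    have "matching_dart p = mi" "matching_dart q = mi"
      using matching_dart_eq_iff[OF ends(1) mi(1)] matching_dart_eq_iff[OF ends(2) mi(1)]
      unfolding ends_def by auto
    then show "partner T p = r" "partner T q = s"
      and "partner (insert mi T) p = s" "partner (insert mi T) q = r"
      using mi ends(5) unfolding partner_def Let_def ends_def by auto
  qed simp
  then show ?thesis unfolding ncircles_eq_nclasses_partner by simp
qed

lemma no_bad_face: "no_bad_face H \<alpha> \<sigma> M"
  unfolding no_bad_face_def bad_face_def Let_def using ncircles_insert_ne by fastforce

end

lemma in_script_G_if_bipartite: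
  fixes side :: "'v \<Rightarrow> bool"
  assumes graph: "tri_pm_graph H \<alpha> vx M"
    and bipartite: "\<And>d. d \<in> H \<Longrightarrow> side (vx (\<alpha> d)) \<noteq> side (vx d)"
  shows "in_script_G H \<alpha> vx M"
  unfolding in_script_G_def
proof (intro conjI allI impI graph)
  fix \<sigma> assume "plane_embedding H \<alpha> vx \<sigma>"
  then interpret bipartite_rotation_system H \<alpha> \<sigma> vx M side
    using graph bipartite by unfold_locales (auto simp: plane_embedding_def)
  show "no_bad_face H \<alpha> \<sigma> M" by (rule no_bad_face)
qed

section \<open>Flattening an oriented diagram\<close>

context
  fixes X :: "'x set" and \<beta> \<tau> :: "'x \<Rightarrow> 'x" and out :: "'x \<Rightarrow> bool"
  assumes diagram: "oriented_diagram X \<beta> \<tau> out"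
begin

lemma beta_X: "d \<in> X \<Longrightarrow> \<beta> d \<in> X \<and> \<beta> d \<noteq> d \<and> \<beta> (\<beta> d) = d"
  using diagram unfolding oriented_diagram_def fpf_involution_on_def by blast

lemma tau_X: "d \<in> X \<Longrightarrow> \<tau> d \<in> X \<and> \<tau> (\<tau> d) \<noteq> d \<and> \<tau> (\<tau> (\<tau> (\<tau> d))) = d"
  using diagram unfolding oriented_diagram_def by blast

lemma out_X: "d \<in> X \<Longrightarrow> out (\<beta> d) = (\<not> out d) \<and> out (\<tau> (\<tau> d)) = (\<not> out d)"
  using diagram unfolding oriented_diagram_def by blast

lemma crossing_eq:
  assumes d: "d \<in> X"
  shows "crossing \<tau> d = {d, \<tau> d, \<tau> (\<tau> d), \<tau> (\<tau> (\<tau> d))}"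
proof
  show "crossing \<tau> d \<subseteq> {d, \<tau> d, \<tau> (\<tau> d), \<tau> (\<tau> (\<tau> d))}"
  proof
    fix e assume "e \<in> crossing \<tau> d"
    then obtain n where e: "e = (\<tau> ^^ n) d" unfolding crossing_def by blast
    have "(\<tau> ^^ n) d \<in> {d, \<tau> d, \<tau> (\<tau> d), \<tau> (\<tau> (\<tau> d))}"
      by (induction n) (use tau_X[OF d] in auto)
    then show "e \<in> {d, \<tau> d, \<tau> (\<tau> d), \<tau> (\<tau> (\<tau> d))}" using e by simp
  qed
  have "d = (\<tau> ^^ 0) d" "\<tau> d = (\<tau> ^^ 1) d" "\<tau> (\<tau> d) = (\<tau> ^^ 2) d" "\<tau> (\<tau> (\<tau> d)) = (\<tau> ^^ 3) d"
    by (simp_all add: numeral_eq_Suc)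
  then show "{d, \<tau> d, \<tau> (\<tau> d), \<tau> (\<tau> (\<tau> d))} \<subseteq> crossing \<tau> d"
    unfolding crossing_def by (metis empty_subsetI insert_subset rangeI)
qed

lemma crossing_subset: "d \<in> X \<Longrightarrow> crossing \<tau> d \<subseteq> X"
  using crossing_eq[of d] tau_X[of d] tau_X[of "\<tau> d"] tau_X[of "\<tau> (\<tau> d)"] by auto

lemma crossing_iff:
  assumes "d \<in> X" "e \<in> X"
  shows "crossing \<tau> e = crossing \<tau> d \<longleftrightarrow> e \<in> crossing \<tau> d"
proof
  show "crossing \<tau> e = crossing \<tau> d \<Longrightarrow> e \<in> crossing \<tau> d"
    using crossing_eq[OF assms(2)] by auto
next
  have tau_d: "\<tau> d \<in> X" "\<tau> (\<tau> d) \<in> X" using tau_X assms(1) by auto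
  have "crossing \<tau> (\<tau> x) = crossing \<tau> x" if "x \<in> X" for x
    using crossing_eq[OF that] crossing_eq[of "\<tau> x"] tau_X[OF that] by auto
  then show "e \<in> crossing \<tau> d \<Longrightarrow> crossing \<tau> e = crossing \<tau> d"
    using crossing_eq[OF assms(1)] assms(1) tau_d by auto
qed

lemma crossing_two_ends_with_out:
  assumes d: "d \<in> X"
  shows "\<exists>x1 x2. x1 \<noteq> x2 \<and> {x \<in> crossing \<tau> d. out x = b} = {x1, x2}"
proof -
  have tau_d: "\<tau> d \<in> X" "\<tau> (\<tau> d) \<in> X" using tau_X d by auto
  have out_opp: "out (\<tau> (\<tau> d)) = (\<not> out d)" "out (\<tau> (\<tau> (\<tau> d))) = (\<not> out (\<tau> d))"
    using out_X d tau_d by auto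
  have "\<tau> x \<noteq> x" if "x \<in> X" for x using tau_X[OF that] by metis
  then have distinct: "d \<noteq> \<tau> d" "d \<noteq> \<tau> (\<tau> (\<tau> d))" "\<tau> (\<tau> d) \<noteq> \<tau> d" "\<tau> (\<tau> d) \<noteq> \<tau> (\<tau> (\<tau> d))"
    using d tau_d tau_X[OF d] by metis+
  define x1 where "x1 = (if out d = b then d else \<tau> (\<tau> d))"
  define x2 where "x2 = (if out (\<tau> d) = b then \<tau> d else \<tau> (\<tau> (\<tau> d)))"
  have "x1 \<noteq> x2" using distinct unfolding x1_def x2_def by auto
  moreover have "{x \<in> crossing \<tau> d. out x = b} = {x1, x2}"
    unfolding crossing_eq[OF d] x1_def x2_def using out_opp by auto
  ultimately show ?thesis by blast
qed

lemma flat_darts_iff: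
  "e \<in> flat_darts X \<tau> \<longleftrightarrow> (\<exists>x\<in>X. e = Inl x) \<or> (\<exists>x\<in>X. \<exists>b. e = Inr (crossing \<tau> x, b))"
  unfolding flat_darts_def by auto

lemma flat_M_iff: "e \<in> flat_M X \<tau> \<longleftrightarrow> (\<exists>x\<in>X. \<exists>b. e = Inr (crossing \<tau> x, b))"
  unfolding flat_M_def by auto

lemma flat_vertex_card:
  assumes d: "d \<in> X"
  shows "card {e \<in> flat_darts X \<tau>. flat_vx \<tau> out e = (crossing \<tau> d, b)} = 3"
proof -
  obtain x1 x2 where x: "x1 \<noteq> x2" "{x \<in> crossing \<tau> d. out x = b} = {x1, x2}"
    using crossing_two_ends_with_out[OF d] by blast
  have "{e \<in> flat_darts X \<tau>. flat_vx \<tau> out e = (crossing \<tau> d, b)}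
      = {Inr (crossing \<tau> d, b), Inl x1, Inl x2}"
  proof (rule set_eqI)
    fix e
    show "e \<in> {e \<in> flat_darts X \<tau>. flat_vx \<tau> out e = (crossing \<tau> d, b)}
        \<longleftrightarrow> e \<in> {Inr (crossing \<tau> d, b), Inl x1, Inl x2}"
    proof (cases e)
      case (Inl y)
      have "Inl y \<in> flat_darts X \<tau> \<and> flat_vx \<tau> out (Inl y) = (crossing \<tau> d, b)
          \<longleftrightarrow> y \<in> {x \<in> crossing \<tau> d. out x = b}"
        using flat_darts_iff[of "Inl y"] crossing_iff[OF d, of y] crossing_subset[OF d] by auto
      then show ?thesis using Inl x(2) by auto
    next
      case (Inr c)
      then show ?thesis using flat_darts_iff[of e] d by (cases c) auto
    qed
  qed
  then show ?thesis using x(1) by simp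
qed

lemma tri_pm_graph_flat: "tri_pm_graph (flat_darts X \<tau>) (flat_alpha \<beta>) (flat_vx \<tau> out) (flat_M X \<tau>)"
  unfolding tri_pm_graph_def
proof (intro conjI ballI)
  show "finite (flat_darts X \<tau>)"
    using diagram unfolding flat_darts_def oriented_diagram_def by simp
  show "fpf_involution_on (flat_darts X \<tau>) (flat_alpha \<beta>)"
    unfolding fpf_involution_on_def
  proof
    fix e assume "e \<in> flat_darts X \<tau>"
    then show "flat_alpha \<beta> e \<in> flat_darts X \<tau> \<and> flat_alpha \<beta> e \<noteq> e
        \<and> flat_alpha \<beta> (flat_alpha \<beta> e) = e"
      unfolding flat_darts_iff using beta_X by auto
  qed
  show "flat_M X \<tau> \<subseteq> flat_darts X \<tau>"
    unfolding flat_M_def flat_darts_def by auto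
next
  fix e assume e: "e \<in> flat_darts X \<tau>"
  then consider x where "x \<in> X" "e = Inl x" | x b where "x \<in> X" "e = Inr (crossing \<tau> x, b)"
    unfolding flat_darts_iff by blast
  then obtain x b where xb: "x \<in> X" "flat_vx \<tau> out e = (crossing \<tau> x, b)"
    by cases auto
  show "card {e' \<in> flat_darts X \<tau>. flat_vx \<tau> out e' = flat_vx \<tau> out e} = 3"
    using flat_vertex_card[OF xb(1)] xb(2) by simp
  show "e \<in> flat_M X \<tau> \<longleftrightarrow> flat_alpha \<beta> e \<in> flat_M X \<tau>"
    using e unfolding flat_darts_iff flat_M_iff by auto
  have "{e' \<in> flat_M X \<tau>. flat_vx \<tau> out e' = (crossing \<tau> x, b)} = {Inr (crossing \<tau> x, b)}"
    unfolding flat_M_iff using xb(1) by auto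
  then show "card {e' \<in> flat_M X \<tau>. flat_vx \<tau> out e' = flat_vx \<tau> out e} = 1"
    using xb(2) by simp
next
  fix e assume "e \<in> flat_M X \<tau>"
  then show "flat_vx \<tau> out (flat_alpha \<beta> e) \<noteq> flat_vx \<tau> out e"
    unfolding flat_M_iff by auto
qed

lemma flat_alpha_bipartite:
  "e \<in> flat_darts X \<tau> \<Longrightarrow> snd (flat_vx \<tau> out (flat_alpha \<beta> e)) \<noteq> snd (flat_vx \<tau> out e)"
  unfolding flat_darts_iff using out_X by auto

end

theorem mainTheorem11:
  fixes X :: "'x set" and \<beta> \<tau> :: "'x \<Rightarrow> 'x" and out :: "'x \<Rightarrow> bool"
  assumes "oriented_diagram X \<beta> \<tau> out"
  shows "in_script_G (flat_darts X \<tau>) (flat_alpha \<beta>) (flat_vx \<tau> out) (flat_M X \<tau>)"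
  by (rule in_script_G_if_bipartite[OF tri_pm_graph_flat[OF assms] flat_alpha_bipartite[OF assms]])

end
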